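(* Let $k$ be a countable infinite field. The two-sorted ultrametric space $(k(t^{\mathbb Q}),d,D)$ underlying the valued field $k(t^{\mathbb Q})$ is, after identifying $D$ with $\mathbb Q_{\ge0}$ via an order isomorphism, isometric to the countable rational Urysohn ultrametric space $\mathbb U$.
   Context: The Hahn field $k[[t^{\mathbb Q}]]$ consists of formal series $a=\sum_{q\in\mathbb Q}a_qt^q$, $a_q\in k$, with well-ordered support $\mathrm{supp}(a)=\{q:a_q\ne0\}$, with the usual addition and multiplication; $k[t^{\mathbb Q}]$ is its subring of elements with finite support, and $k(t^{\mathbb Q})$ is the field of fractions of $k[t^{\mathbb Q}]$ (inside $k[[t^{\mathbb Q}]]$). The valuation is $v(a)=\min\mathrm{supp}(a)$ ($v(0)=\infty$). The distance set $D=\{e^{-q}:q\in\mathbb Q\}\cup\{0\}$ is ordered as a subset of $\mathbb R$ (order-isomorphic to $\mathbb Q_{\ge0}$), and $d(a,b)=e^{-v(a-b)}$ with $e^{-\infty}=0$. $\mathbb U$ is the unique countable ultrametric space with distances in $\mathbb Q_{\ge0}$ universal for finite rational ultrametric spaces in which every isometry between finite subsets extends to a global isometry. *)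

theory Defs
  imports Complex_Main "HOL-Library.Countable_Set"
begin

definition hsupp :: "(rat \<Rightarrow> 'k::zero) \<Rightarrow> rat set" where
  "hsupp a = {q. a q \<noteq> 0}"

definition hahn :: "(rat \<Rightarrow> 'k::field) set" where
  "hahn = {a. \<forall>S. S \<subseteq> hsupp a \<longrightarrow> S \<noteq> {} \<longrightarrow> (\<exists>m\<in>S. \<forall>x\<in>S. m \<le> x)}"

definition hadd :: "(rat \<Rightarrow> 'k::field) \<Rightarrow> (rat \<Rightarrow> 'k) \<Rightarrow> rat \<Rightarrow> 'k" where
  "hadd a b = (\<lambda>q. a q + b q)"

definition hsub :: "(rat \<Rightarrow> 'k::field) \<Rightarrow> (rat \<Rightarrow> 'k) \<Rightarrow> rat \<Rightarrow> 'k" where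
  "hsub a b = (\<lambda>q. a q - b q)"

text \<open>Cauchy product (the index sets are finite for Hahn series).\<close>
definition hmul :: "(rat \<Rightarrow> 'k::field) \<Rightarrow> (rat \<Rightarrow> 'k) \<Rightarrow> rat \<Rightarrow> 'k" where
  "hmul a b = (\<lambda>q. sum (\<lambda>(r, s). a r * b s)
      {(r, s). r \<in> hsupp a \<and> s \<in> hsupp b \<and> r + s = q})"

text \<open>k[t^Q]: finite support. k(t^Q): fraction field of k[t^Q] inside k[[t^Q]],
  i.e. the Hahn series a with a * q = p for some p, q in k[t^Q], q \<noteq> 0.\<close>
definition hpoly :: "(rat \<Rightarrow> 'k::field) set" where
  "hpoly = {a. finite (hsupp a)}"

definition hrat :: "(rat \<Rightarrow> 'k::field) set" where
  "hrat = {a \<in> hahn. \<exists>p q. p \<in> hpoly \<and> q \<in> hpoly \<and> q \<noteq> (\<lambda>_. 0) \<and> hmul a q = p}"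

definition hval :: "(rat \<Rightarrow> 'k::field) \<Rightarrow> rat" where
  "hval a = (LEAST q. q \<in> hsupp a)"

definition hdist :: "(rat \<Rightarrow> 'k::field) \<Rightarrow> (rat \<Rightarrow> 'k) \<Rightarrow> real" where
  "hdist a b = (if a = b then 0 else exp (- real_of_rat (hval (hsub a b))))"

definition distset :: "real set" where
  "distset = {exp (- real_of_rat q) | q. True} \<union> {0}"

definition rat_ultrametric :: "'a set \<Rightarrow> ('a \<Rightarrow> 'a \<Rightarrow> rat) \<Rightarrow> bool" where
  "rat_ultrametric X \<delta> \<longleftrightarrow>
     (\<forall>x\<in>X. \<forall>y\<in>X. 0 \<le> \<delta> x y \<and> (\<delta> x y = 0 \<longleftrightarrow> x = y) \<and> \<delta> x y = \<delta> y x) \<and>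
     (\<forall>x\<in>X. \<forall>y\<in>X. \<forall>z\<in>X. \<delta> x z \<le> max (\<delta> x y) (\<delta> y z))"

definition isom_embedding :: "'a set \<Rightarrow> ('a \<Rightarrow> 'a \<Rightarrow> rat) \<Rightarrow> 'b set \<Rightarrow> ('b \<Rightarrow> 'b \<Rightarrow> rat)
    \<Rightarrow> ('a \<Rightarrow> 'b) \<Rightarrow> bool" where
  "isom_embedding A \<rho> B \<delta> f \<longleftrightarrow> f ` A \<subseteq> B \<and> (\<forall>x\<in>A. \<forall>y\<in>A. \<delta> (f x) (f y) = \<rho> x y)"

text \<open>Countable, universal for finite rational ultrametric spaces (finite spaces are
  represented on finite subsets of nat, which loses no generality), and ultrahomogeneous.\<close>
definition rat_urysohn :: "'a set \<Rightarrow> ('a \<Rightarrow> 'a \<Rightarrow> rat) \<Rightarrow> bool" where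
  "rat_urysohn X \<delta> \<longleftrightarrow>
     countable X \<and> rat_ultrametric X \<delta> \<and>
     (\<forall>(F::nat set) \<rho>. finite F \<longrightarrow> rat_ultrametric F \<rho> \<longrightarrow>
        (\<exists>f. isom_embedding F \<rho> X \<delta> f)) \<and>
     (\<forall>A f. finite A \<longrightarrow> A \<subseteq> X \<longrightarrow> isom_embedding A \<delta> X \<delta> f \<longrightarrow>
        (\<exists>g. bij_betw g X X \<and> isom_embedding X \<delta> X \<delta> g \<and> (\<forall>x\<in>A. g x = f x)))"

end

theory Submission
  imports Defs
begin

text \<open>A countable rational ultrametric space in which every admissible assignment of distances
  to finitely many points is realized by a point is universal for finite rational ultrametric
  spaces, and by back and forth it is ultrahomogeneous and isometric to every other such space, in
  particular to the Urysohn space, which has this extension property by universality and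
  homogeneity. The field k(t^Q) is countable, and it has the extension property: to be at distance
  e^(-\<gamma>) from a0 and from the points of A close to a0, add c t^\<gamma> to a0 with c avoiding the
  finitely many coefficients a \<gamma> - a0 \<gamma>, which is possible because k is infinite.\<close>

section \<open>Rational ultrametric spaces with the extension property\<close>

lemma rat_ultrametric_subset: "rat_ultrametric X d \<Longrightarrow> Y \<subseteq> X \<Longrightarrow> rat_ultrametric Y d"
  unfolding rat_ultrametric_def by blast

lemma rat_ultrametric_sym: "rat_ultrametric X d \<Longrightarrow> x \<in> X \<Longrightarrow> y \<in> X \<Longrightarrow> d x y = d y x"
  unfolding rat_ultrametric_def by blast

lemma rat_ultrametric_self: "rat_ultrametric X d \<Longrightarrow> x \<in> X \<Longrightarrow> d x x = 0"
  unfolding rat_ultrametric_def by blast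

lemma rat_ultrametric_eq_0_iff: "rat_ultrametric X d \<Longrightarrow> x \<in> X \<Longrightarrow> y \<in> X \<Longrightarrow> d x y = 0 \<longleftrightarrow> x = y"
  unfolding rat_ultrametric_def by blast

lemma rat_ultrametric_pos: "rat_ultrametric X d \<Longrightarrow> x \<in> X \<Longrightarrow> y \<in> X \<Longrightarrow> x \<noteq> y \<Longrightarrow> 0 < d x y"
  unfolding rat_ultrametric_def by (metis order_le_less)

lemma rat_ultrametric_le_max:
  "rat_ultrametric X d \<Longrightarrow> x \<in> X \<Longrightarrow> y \<in> X \<Longrightarrow> z \<in> X \<Longrightarrow> d x z \<le> max (d x y) (d y z)"
  unfolding rat_ultrametric_def by blast

text \<open>r a is the prescribed distance of a new point to a.\<close>
definition admissible_dists :: "'a set \<Rightarrow> ('a \<Rightarrow> 'a \<Rightarrow> rat) \<Rightarrow> ('a \<Rightarrow> rat) \<Rightarrow> bool" where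
  "admissible_dists A d r \<longleftrightarrow> (\<forall>a\<in>A. 0 < r a) \<and>
     (\<forall>a\<in>A. \<forall>b\<in>A. d a b \<le> max (r a) (r b) \<and> r a \<le> max (d a b) (r b))"

definition extension_property :: "'a set \<Rightarrow> ('a \<Rightarrow> 'a \<Rightarrow> rat) \<Rightarrow> bool" where
  "extension_property X d \<longleftrightarrow>
     (\<forall>A r. finite A \<longrightarrow> A \<subseteq> X \<longrightarrow> admissible_dists A d r \<longrightarrow> (\<exists>z\<in>X. \<forall>a\<in>A. d z a = r a))"

lemma admissible_dists_point:
  assumes um: "rat_ultrametric X d" and x: "x \<in> X" and A: "A \<subseteq> X" "x \<notin> A"
  shows "admissible_dists A d (d x)"
  unfolding admissible_dists_def
proof (intro conjI ballI)
  fix a assume "a \<in> A"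
  with A show "0 < d x a" using rat_ultrametric_pos[OF um x] by blast
next
  fix a b assume "a \<in> A" "b \<in> A"
  with A have a: "a \<in> X" and b: "b \<in> X" by auto
  have "d a b \<le> max (d a x) (d x b)" "d x a \<le> max (d x b) (d b a)"
    using rat_ultrametric_le_max[OF um] a b x by blast+
  moreover have "d a x = d x a" "d b a = d a b"
    using rat_ultrametric_sym[OF um] a b x by blast+
  ultimately show "d a b \<le> max (d x a) (d x b)" "d x a \<le> max (d a b) (d x b)"
    by (simp_all add: max.commute)
qed

lemma rat_ultrametric_insert_point:
  assumes um: "rat_ultrametric A d" and p: "p \<notin> A" and r: "admissible_dists A d r"
  shows "rat_ultrametric (insert p A)
           (\<lambda>a b. if a = b then 0 else if a = p then r b else if b = p then r a else d a b)"
    (is "rat_ultrametric _ ?\<rho>")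
proof -
  have pos: "0 < r a" if "a \<in> A" for a
    using r that unfolding admissible_dists_def by blast
  have basic: "0 \<le> ?\<rho> x y \<and> (?\<rho> x y = 0 \<longleftrightarrow> x = y) \<and> ?\<rho> x y = ?\<rho> y x"
    if "x \<in> insert p A" "y \<in> insert p A" for x y
  proof (cases "x = y \<or> x = p \<or> y = p")
    case True
    with that pos[of x] pos[of y] p show ?thesis by (auto simp: less_imp_le)
  next
    case False
    with that um show ?thesis unfolding rat_ultrametric_def by auto
  qed
  have tri: "?\<rho> x z \<le> max (?\<rho> x y) (?\<rho> y z)"
    if xyz: "x \<in> insert p A" "y \<in> insert p A" "z \<in> insert p A" for x y z
  proof (cases "x = y \<or> y = z \<or> x = z")
    case True
    then show ?thesis using basic[of x y] basic[of y z] basic[of x z] xyz by (auto simp: le_max_iff_disj)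
  next
    case False
    then consider "x = p" "y \<in> A" "z \<in> A" | "y = p" "x \<in> A" "z \<in> A" | "z = p" "x \<in> A" "y \<in> A"
      | "x \<in> A" "y \<in> A" "z \<in> A" "p \<notin> {x, y, z}"
      using xyz by auto
    then show ?thesis
    proof cases
      case 1
      then show ?thesis using False r rat_ultrametric_sym[OF um, of y z] unfolding admissible_dists_def
        by (auto simp: max.commute)
    next
      case 2
      then show ?thesis using False r unfolding admissible_dists_def by auto
    next
      case 3
      then show ?thesis using False r unfolding admissible_dists_def by auto
    next
      case 4
      then show ?thesis using False rat_ultrametric_le_max[OF um] by auto
    qed
  qed
  with basic show ?thesis unfolding rat_ultrametric_def by blast
qed

lemma extension_property_nonempty:
  assumes "extension_property X d"
  shows "X \<noteq> {}"
  using assms[unfolded extension_property_def, rule_format, of "{}"]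
  by (auto simp: admissible_dists_def)

lemma extension_propertyD:
  assumes ep: "extension_property X d" and um: "rat_ultrametric X d"
    and I: "finite I" "g ` I \<subseteq> X" and r: "admissible_dists I (\<lambda>i j. d (g i) (g j)) r"
  shows "\<exists>z\<in>X. \<forall>i\<in>I. d z (g i) = r i"
proof -
  have r_le: "r i \<le> r j" if ij: "i \<in> I" "j \<in> I" "g i = g j" for i j
  proof -
    have "d (g i) (g j) = 0" using ij I rat_ultrametric_self[OF um] by auto
    moreover have "r i \<le> max (d (g i) (g j)) (r j)" "0 < r j"
      using r ij unfolding admissible_dists_def by blast+
    ultimately show ?thesis by simp
  qed
  define r' where "r' b = r (SOME i. i \<in> I \<and> g i = b)" for b
  have r'_g: "r' (g i) = r i" if "i \<in> I" for i
    unfolding r'_def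
  proof (rule someI2[of _ i])
    show "i \<in> I \<and> g i = g i" using that by simp
  next
    fix j assume "j \<in> I \<and> g j = g i"
    then show "r j = r i" using r_le that by (metis order_antisym)
  qed
  have "admissible_dists (g ` I) d r'"
    using r unfolding admissible_dists_def by (simp add: r'_g)
  then obtain z where z: "z \<in> X" "\<forall>a\<in>g ` I. d z a = r' a"
    using ep I unfolding extension_property_def by (meson finite_imageI)
  then have "\<forall>i\<in>I. d z (g i) = r i" by (simp add: r'_g)
  with z(1) show ?thesis by blast
qed

text \<open>To realize the distances r, take a0 with r a0 minimal: points of A inside the ball of
  radius r a0 around a0 must get distance r a0, and the points outside that ball are at the
  right distance from any z with d z a0 = r a0 by the ultrametric inequality.\<close>
lemma extension_propertyI:
  assumes um: "rat_ultrametric X d" and "X \<noteq> {}"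
    and ball: "\<And>A a0 m. finite A \<Longrightarrow> A \<subseteq> X \<Longrightarrow> a0 \<in> X \<Longrightarrow> 0 < m \<Longrightarrow>
       \<exists>z\<in>X. d z a0 = m \<and> (\<forall>a\<in>A. d a a0 \<le> m \<longrightarrow> d z a = m)"
  shows "extension_property X d"
  unfolding extension_property_def
proof (intro allI impI)
  fix A r
  assume fin: "finite A" and AX: "A \<subseteq> X" and r: "admissible_dists A d r"
  show "\<exists>z\<in>X. \<forall>a\<in>A. d z a = r a"
  proof (cases "A = {}")
    case True
    then show ?thesis using \<open>X \<noteq> {}\<close> by auto
  next
    case False
    have "Min (r ` A) \<in> r ` A" using fin False by simp
    then obtain a0 where a0: "a0 \<in> A" "r a0 = Min (r ` A)" by auto
    then have a0_min: "r a0 \<le> r a" if "a \<in> A" for a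
      using fin that by simp
    have r_a0: "0 < r a0"
      and r_dist: "\<And>a. a \<in> A \<Longrightarrow> r a \<le> max (d a a0) (r a0) \<and> d a a0 \<le> max (r a) (r a0)"
      using r a0 unfolding admissible_dists_def by blast+
    obtain z where z: "z \<in> X" "d z a0 = r a0" "\<forall>a\<in>A. d a a0 \<le> r a0 \<longrightarrow> d z a = r a0"
      using ball[OF fin AX _ r_a0] a0 AX by blast
    have "d z a = r a" if a: "a \<in> A" for a
    proof (cases "d a a0 \<le> r a0")
      case True
      then have "r a \<le> r a0" using r_dist[OF a] by simp
      then have "r a = r a0" using a0_min[OF a] by simp
      with z True a show ?thesis by simp
    next
      case False
      then have ra: "r a = d a a0" using r_dist[OF a] a0_min[OF a] by (simp add: max_def split: if_splits)
      have "a \<in> X" "a0 \<in> X" using a a0 AX by auto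
      then have "d a a0 \<le> max (d a z) (d z a0)" "d z a \<le> max (d z a0) (d a0 a)"
        "d a z = d z a" "d a0 a = d a a0"
        using z(1) rat_ultrametric_le_max[OF um] rat_ultrametric_sym[OF um] by blast+
      with z(2) False ra show ?thesis by (simp add: max_def split: if_splits)
    qed
    with z(1) show ?thesis by blast
  qed
qed

lemma extension_property_universal:
  assumes ep: "extension_property X d" and um: "rat_ultrametric X d"
  shows "finite F \<Longrightarrow> rat_ultrametric F \<rho> \<Longrightarrow> \<exists>f. isom_embedding F \<rho> X d f"
proof (induction F rule: finite_induct)
  case empty
  then show ?case unfolding isom_embedding_def by auto
next
  case (insert x F)
  have "rat_ultrametric F \<rho>"
    using rat_ultrametric_subset[OF insert.prems] by blast
  then obtain f where f: "isom_embedding F \<rho> X d f"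
    using insert.IH by blast
  then have fX: "f ` F \<subseteq> X" and f_iso: "\<forall>i\<in>F. \<forall>j\<in>F. d (f i) (f j) = \<rho> i j"
    unfolding isom_embedding_def by auto
  have "admissible_dists F \<rho> (\<rho> x)"
    using admissible_dists_point[OF insert.prems insertI1 subset_insertI insert.hyps(2)] .
  then have "admissible_dists F (\<lambda>i j. d (f i) (f j)) (\<rho> x)"
    using f_iso unfolding admissible_dists_def by simp
  then obtain z where z: "z \<in> X" "\<forall>i\<in>F. d z (f i) = \<rho> x i"
    using extension_propertyD[OF ep um insert.hyps(1) fX] by blast
  have "isom_embedding (insert x F) \<rho> X d (f(x := z))"
    unfolding isom_embedding_def
  proof (intro conjI ballI)
    show "(f(x := z)) ` insert x F \<subseteq> X" using fX z insert.hyps by auto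
  next
    have zz: "d z z = \<rho> x x"
      using rat_ultrametric_self[OF um z(1)] rat_ultrametric_self[OF insert.prems] by simp
    have zf: "d (f i) z = \<rho> i x" if "i \<in> F" for i
      using that z fX rat_ultrametric_sym[OF um, of "f i" z] rat_ultrametric_sym[OF insert.prems, of i x]
      by auto
    fix a b assume "a \<in> insert x F" "b \<in> insert x F"
    then show "d ((f(x := z)) a) ((f(x := z)) b) = \<rho> a b"
      using insert.hyps(2) z(2) zz zf f_iso by (cases "a = x"; cases "b = x") auto
  qed
  then show ?case by blast
qed

text \<open>Realize A together with one new point abstractly on a finite set of naturals, embed it
  by universality, and move the copy of A back onto A by homogeneity.\<close>
lemma rat_urysohn_extension_property:
  fixes U :: "nat set"
  assumes ur: "rat_urysohn U d"
  shows "extension_property U d"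
  unfolding extension_property_def
proof (intro allI impI)
  fix A r
  assume fin: "finite A" and AU: "A \<subseteq> U" and r: "admissible_dists A d r"
  have um: "rat_ultrametric U d"
    and universal: "\<And>(F :: nat set) \<rho>. finite F \<Longrightarrow> rat_ultrametric F \<rho> \<Longrightarrow>
       \<exists>f. isom_embedding F \<rho> U d f"
    and homogeneous: "\<And>f. isom_embedding A d U d f \<Longrightarrow>
       \<exists>g. bij_betw g U U \<and> isom_embedding U d U d g \<and> (\<forall>x\<in>A. g x = f x)"
    using ur fin AU unfolding rat_urysohn_def by auto
  obtain p :: nat where p: "p \<notin> A" using fin ex_new_if_finite infinite_UNIV_nat by blast
  define \<rho> where "\<rho> a b = (if a = b then 0 else if a = p then r b else if b = p then r a else d a b)"
    for a b
  have "rat_ultrametric (insert p A) \<rho>"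
    unfolding \<rho>_def using rat_ultrametric_insert_point[OF rat_ultrametric_subset[OF um AU] p r] .
  then obtain f where f: "isom_embedding (insert p A) \<rho> U d f"
    using universal fin by blast
  have "\<rho> a b = d a b" if "a \<in> A" "b \<in> A" for a b
    using that p AU rat_ultrametric_self[OF um] unfolding \<rho>_def by auto
  then have "isom_embedding A d U d f"
    using f unfolding isom_embedding_def by auto
  then obtain g where g: "bij_betw g U U" "isom_embedding U d U d g" "\<forall>x\<in>A. g x = f x"
    using homogeneous by blast
  have "f p \<in> U" using f unfolding isom_embedding_def by auto
  then obtain z where z: "z \<in> U" "g z = f p"
    using g(1) unfolding bij_betw_def by (metis imageE)
  have "d z a = r a" if a: "a \<in> A" for a
  proof -
    have "d z a = d (g z) (g a)" using g(2) z(1) a AU unfolding isom_embedding_def by auto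
    also have "\<dots> = d (f p) (f a)" using z g(3) a by simp
    also have "\<dots> = \<rho> p a" using f a unfolding isom_embedding_def by auto
    also have "\<dots> = r a" using p a unfolding \<rho>_def by auto
    finally show ?thesis .
  qed
  with z(1) show "\<exists>z\<in>U. \<forall>a\<in>A. d z a = r a" by blast
qed

section \<open>Back and forth\<close>

text \<open>Finite partial isometries are kept as their graphs, so that the converse relation exchanges
  the roles of X and Y.\<close>
definition partial_isometry ::
    "('a \<times> 'b) set \<Rightarrow> 'a set \<Rightarrow> ('a \<Rightarrow> 'a \<Rightarrow> rat) \<Rightarrow> 'b set \<Rightarrow> ('b \<Rightarrow> 'b \<Rightarrow> rat) \<Rightarrow> bool" where
  "partial_isometry R X dX Y dY \<longleftrightarrow>
     finite R \<and> R \<subseteq> X \<times> Y \<and> (\<forall>(x, y)\<in>R. \<forall>(x', y')\<in>R. dY y y' = dX x x')"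

lemma partial_isometry_converse:
  "partial_isometry R X dX Y dY \<Longrightarrow> partial_isometry (R\<inverse>) Y dY X dX"
  unfolding partial_isometry_def by fastforce

lemma partial_isometry_extend_Domain:
  assumes umX: "rat_ultrametric X dX" and umY: "rat_ultrametric Y dY"
    and ep: "extension_property Y dY" and R: "partial_isometry R X dX Y dY" and x: "x \<in> X"
  shows "\<exists>y. partial_isometry (insert (x, y) R) X dX Y dY"
proof (cases "x \<in> Domain R")
  case True
  then obtain y where "(x, y) \<in> R" by blast
  with R have "partial_isometry (insert (x, y) R) X dX Y dY" by (simp add: insert_absorb)
  then show ?thesis ..
next
  case False
  have fin: "finite R" and RXY: "R \<subseteq> X \<times> Y"
    and iso: "\<And>x1 y1 x2 y2. (x1, y1) \<in> R \<Longrightarrow> (x2, y2) \<in> R \<Longrightarrow> dY y1 y2 = dX x1 x2"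
    using R unfolding partial_isometry_def by auto
  have "fst ` R \<subseteq> X" "x \<notin> fst ` R" using RXY False by (auto simp: fst_eq_Domain)
  then have "admissible_dists (fst ` R) dX (dX x)"
    by (rule admissible_dists_point[OF umX x])
  moreover have "dY (snd i) (snd j) = dX (fst i) (fst j)" if "i \<in> R" "j \<in> R" for i j
    using iso[of "fst i" "snd i" "fst j" "snd j"] that by simp
  ultimately have "admissible_dists R (\<lambda>i j. dY (snd i) (snd j)) (\<lambda>i. dX x (fst i))"
    unfolding admissible_dists_def by simp
  moreover have "snd ` R \<subseteq> Y" using RXY by auto
  ultimately obtain y where y: "y \<in> Y" "\<forall>i\<in>R. dY y (snd i) = dX x (fst i)"
    using extension_propertyD[OF ep umY fin] by blast
  have new_old: "dY y y' = dX x x'" if "(x', y') \<in> R" for x' y'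
    using y(2) that by fastforce
  have old_new: "dY y' y = dX x' x" if "(x', y') \<in> R" for x' y'
  proof -
    have "x' \<in> X" "y' \<in> Y" using that RXY by auto
    then show ?thesis
      using new_old[OF that] rat_ultrametric_sym[OF umX x] rat_ultrametric_sym[OF umY y(1)] by simp
  qed
  have "dY y y = dX x x"
    using rat_ultrametric_self[OF umX x] rat_ultrametric_self[OF umY y(1)] by simp
  with R x y(1) new_old old_new have "partial_isometry (insert (x, y) R) X dX Y dY"
    unfolding partial_isometry_def by auto
  then show ?thesis ..
qed

lemma partial_isometry_extend_Range:
  assumes "rat_ultrametric X dX" "rat_ultrametric Y dY"
    and "extension_property X dX" and "partial_isometry R X dX Y dY" and "y \<in> Y"
  shows "\<exists>x. partial_isometry (insert (x, y) R) X dX Y dY"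
proof -
  obtain x where "partial_isometry (insert (y, x) (R\<inverse>)) Y dY X dX"
    using partial_isometry_extend_Domain[OF assms(2,1,3) partial_isometry_converse[OF assms(4)] assms(5)]
    by blast
  then have "partial_isometry ((insert (y, x) (R\<inverse>))\<inverse>) X dX Y dY"
    by (rule partial_isometry_converse)
  moreover have "(insert (y, x) (R\<inverse>))\<inverse> = insert (x, y) R" by auto
  ultimately have "partial_isometry (insert (x, y) R) X dX Y dY" by simp
  then show ?thesis ..
qed

lemma partial_isometry_extend:
  assumes "rat_ultrametric X dX" "rat_ultrametric Y dY"
    and "extension_property X dX" "extension_property Y dY"
    and "partial_isometry R X dX Y dY" and "x \<in> X" "y \<in> Y"
  shows "\<exists>R'. partial_isometry R' X dX Y dY \<and> R \<subseteq> R' \<and> x \<in> Domain R' \<and> y \<in> Range R'"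
proof -
  obtain y' where R1: "partial_isometry (insert (x, y') R) X dX Y dY"
    using partial_isometry_extend_Domain[OF assms(1,2,4,5,6)] by blast
  obtain x' where "partial_isometry (insert (x', y) (insert (x, y') R)) X dX Y dY"
    using partial_isometry_extend_Range[OF assms(1-3) R1 assms(7)] by blast
  then show ?thesis by blast
qed

lemma bij_betw_isometry_of_relation:
  assumes umX: "rat_ultrametric X dX" and umY: "rat_ultrametric Y dY"
    and S: "S \<subseteq> X \<times> Y" "Domain S = X" "Range S = Y"
    and iso: "\<And>x y x' y'. (x, y) \<in> S \<Longrightarrow> (x', y') \<in> S \<Longrightarrow> dY y y' = dX x x'"
  shows "\<exists>f. bij_betw f X Y \<and> (\<forall>x\<in>X. \<forall>x'\<in>X. dY (f x) (f x') = dX x x') \<and> (\<forall>(x, y)\<in>S. f x = y)"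
proof -
  have unique: "y = y'" if "(x, y) \<in> S" "(x, y') \<in> S" for x y y'
  proof -
    have "x \<in> X" "y \<in> Y" "y' \<in> Y" using that S(1) by auto
    moreover have "dY y y' = dX x x" by (rule iso[OF that])
    ultimately show ?thesis
      using rat_ultrametric_self[OF umX] rat_ultrametric_eq_0_iff[OF umY] by simp
  qed
  define f where "f x = (THE y. (x, y) \<in> S)" for x
  have f: "f x = y" if "(x, y) \<in> S" for x y
    unfolding f_def by (rule the_equality) (use that unique in auto)
  have f_S: "(x, f x) \<in> S" if x: "x \<in> X" for x
  proof -
    obtain y where "(x, y) \<in> S" using x S(2) by blast
    with f show ?thesis by simp
  qed
  have f_iso: "dY (f x) (f x') = dX x x'" if "x \<in> X" "x' \<in> X" for x x'
    using iso[OF f_S f_S] that .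
  have "inj_on f X"
  proof (rule inj_onI)
    fix x x' assume x: "x \<in> X" "x' \<in> X" and eq: "f x = f x'"
    have "f x \<in> Y" using f_S[OF x(1)] S(1) by blast
    then have "dX x x' = 0"
      using f_iso[OF x] eq rat_ultrametric_self[OF umY] by simp
    with x show "x = x'" using rat_ultrametric_eq_0_iff[OF umX] by blast
  qed
  moreover have "f ` X = Y"
  proof
    show "f ` X \<subseteq> Y" using f_S S(1) by blast
    show "Y \<subseteq> f ` X"
    proof
      fix y assume "y \<in> Y"
      then obtain x where "(x, y) \<in> S" using S(3) by blast
      moreover from this have "x \<in> X" using S(1) by blast
      ultimately show "y \<in> f ` X" using f by blast
    qed
  qed
  ultimately show ?thesis
    using f_iso f unfolding bij_betw_def by blast
qed

lemma partial_isometry_exhausting_chain: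
  assumes umX: "rat_ultrametric X dX" and umY: "rat_ultrametric Y dY"
    and epX: "extension_property X dX" and epY: "extension_property Y dY"
    and "countable X" "countable Y" and R: "partial_isometry R X dX Y dY"
  shows "\<exists>C. C 0 = R \<and> incseq C \<and> (\<forall>n. partial_isometry (C n) X dX Y dY) \<and>
           (\<forall>x\<in>X. \<exists>n. x \<in> Domain (C n)) \<and> (\<forall>y\<in>Y. \<exists>n. y \<in> Range (C n))"
proof -
  define P where "P n R R' \<longleftrightarrow> partial_isometry R' X dX Y dY \<and> R \<subseteq> R' \<and>
      from_nat_into X n \<in> Domain R' \<and> from_nat_into Y n \<in> Range R'" for n R R'
  have ext: "P n R' (SOME R''. P n R' R'')" if "partial_isometry R' X dX Y dY" for n R'
  proof (rule someI_ex)
    have "from_nat_into X n \<in> X" "from_nat_into Y n \<in> Y"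
      by (simp_all add: from_nat_into extension_property_nonempty[OF epX]
          extension_property_nonempty[OF epY])
    from partial_isometry_extend[OF umX umY epX epY that this]
    show "\<exists>R''. P n R' R''" unfolding P_def .
  qed
  define C where "C = rec_nat R (\<lambda>n R'. SOME R''. P n R' R'')"
  have C_Suc: "C (Suc n) = (SOME R''. P n (C n) R'')" for n
    by (simp add: C_def)
  have C_iso: "partial_isometry (C n) X dX Y dY" for n
  proof (induction n)
    case 0
    show ?case using R by (simp add: C_def)
  next
    case (Suc n)
    have "P n (C n) (C (Suc n))"
      unfolding C_Suc by (rule ext[OF Suc.IH])
    then show ?case unfolding P_def by blast
  qed
  have C_step: "P n (C n) (C (Suc n))" for n
    unfolding C_Suc by (rule ext[OF C_iso])
  then have "incseq C"
    unfolding P_def by (intro incseq_SucI) blast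
  moreover have "\<exists>n. x \<in> Domain (C n)" if "x \<in> X" for x
  proof -
    obtain n where "x = from_nat_into X n"
      using from_nat_into_surj[OF \<open>countable X\<close> \<open>x \<in> X\<close>] by metis
    then show ?thesis using C_step[of n] unfolding P_def by blast
  qed
  moreover have "\<exists>n. y \<in> Range (C n)" if "y \<in> Y" for y
  proof -
    obtain n where "y = from_nat_into Y n"
      using from_nat_into_surj[OF \<open>countable Y\<close> \<open>y \<in> Y\<close>] by metis
    then show ?thesis using C_step[of n] unfolding P_def by blast
  qed
  moreover have "C 0 = R" by (simp add: C_def)
  ultimately show ?thesis using C_iso by blast
qed

lemma back_and_forth:
  assumes umX: "rat_ultrametric X dX" and umY: "rat_ultrametric Y dY"
    and epX: "extension_property X dX" and epY: "extension_property Y dY"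
    and "countable X" "countable Y" and R: "partial_isometry R X dX Y dY"
  shows "\<exists>f. bij_betw f X Y \<and> (\<forall>x\<in>X. \<forall>x'\<in>X. dY (f x) (f x') = dX x x') \<and> (\<forall>(x, y)\<in>R. f x = y)"
proof -
  obtain C where C: "C 0 = R" "incseq C" "\<And>n. partial_isometry (C n) X dX Y dY"
    and dom: "\<forall>x\<in>X. \<exists>n. x \<in> Domain (C n)" and ran: "\<forall>y\<in>Y. \<exists>n. y \<in> Range (C n)"
    using partial_isometry_exhausting_chain[OF assms] by blast
  define S where "S = (\<Union>n. C n)"
  have S_iso: "dY y y' = dX x x'" if xy: "(x, y) \<in> S" "(x', y') \<in> S" for x y x' y'
  proof -
    obtain m n where "(x, y) \<in> C m" "(x', y') \<in> C n"
      using xy unfolding S_def by blast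
    then have "(x, y) \<in> C (max m n)" "(x', y') \<in> C (max m n)"
      using \<open>incseq C\<close> by (auto dest: incseqD[of _ m "max m n"] incseqD[of _ n "max m n"])
    then show ?thesis
      using C(3)[of "max m n"] unfolding partial_isometry_def by blast
  qed
  have S_sub: "S \<subseteq> X \<times> Y"
    using C(3) unfolding S_def partial_isometry_def by blast
  have "X \<subseteq> Domain S"
  proof
    fix x assume "x \<in> X"
    then obtain n y where "(x, y) \<in> C n" using dom by blast
    then show "x \<in> Domain S" unfolding S_def by blast
  qed
  then have S_Domain: "Domain S = X" using S_sub by blast
  have "Y \<subseteq> Range S"
  proof
    fix y assume "y \<in> Y"
    then obtain n x where "(x, y) \<in> C n" using ran by blast
    then show "y \<in> Range S" unfolding S_def by blast
  qed
  then have S_Range: "Range S = Y" using S_sub by blast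
  obtain f where f: "bij_betw f X Y" "\<forall>x\<in>X. \<forall>x'\<in>X. dY (f x) (f x') = dX x x'"
      and f_S: "\<forall>(x, y)\<in>S. f x = y"
    using bij_betw_isometry_of_relation[OF umX umY S_sub S_Domain S_Range S_iso] by blast
  have "R \<subseteq> S" unfolding S_def using C(1) UN_upper[of 0 UNIV C] by simp
  with f_S have "\<forall>(x, y)\<in>R. f x = y" by auto
  with f show ?thesis by blast
qed

lemma rat_urysohn_if_extension_property:
  assumes "countable X" and um: "rat_ultrametric X d" and ep: "extension_property X d"
  shows "rat_urysohn X d"
  unfolding rat_urysohn_def
proof (intro conjI allI impI)
  fix F :: "nat set" and \<rho>
  assume "finite F" "rat_ultrametric F \<rho>"
  then show "\<exists>f. isom_embedding F \<rho> X d f"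
    by (rule extension_property_universal[OF ep um])
next
  fix A f assume "finite A" "A \<subseteq> X" "isom_embedding A d X d f"
  then have "partial_isometry ((\<lambda>a. (a, f a)) ` A) X d X d"
    unfolding partial_isometry_def isom_embedding_def by auto
  then obtain g where g: "bij_betw g X X" "\<forall>x\<in>X. \<forall>x'\<in>X. d (g x) (g x') = d x x'"
      "\<forall>(a, b)\<in>(\<lambda>a. (a, f a)) ` A. g a = b"
    using back_and_forth[OF um um ep ep \<open>countable X\<close> \<open>countable X\<close>] by blast
  then have "isom_embedding X d X d g"
    unfolding isom_embedding_def bij_betw_def by blast
  with g show "\<exists>g. bij_betw g X X \<and> isom_embedding X d X d g \<and> (\<forall>x\<in>A. g x = f x)"
    by auto
qed (use assms in auto)

lemma isometric_to_rat_urysohn: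
  fixes U :: "nat set"
  assumes "countable X" "rat_ultrametric X d" "extension_property X d" and U: "rat_urysohn U \<delta>"
  shows "\<exists>f. bij_betw f X U \<and> (\<forall>a\<in>X. \<forall>b\<in>X. \<delta> (f a) (f b) = d a b)"
proof -
  have "countable U" "rat_ultrametric U \<delta>" using U unfolding rat_urysohn_def by auto
  moreover have "partial_isometry {} X d U \<delta>" unfolding partial_isometry_def by simp
  ultimately show ?thesis
    using back_and_forth[OF assms(2) _ assms(3) rat_urysohn_extension_property[OF U] assms(1)]
    by blast
qed

section \<open>The distance set as the nonnegative rationals\<close>

definition pos_rat :: "rat \<Rightarrow> rat" where
  "pos_rat x = (if 0 \<le> x then x + 1 else 1 / (1 - x))"

lemma pos_rat_gt_0: "0 < pos_rat x"
  unfolding pos_rat_def by auto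

lemma strict_mono_pos_rat: "strict_mono pos_rat"
proof (rule strict_monoI)
  fix x y :: rat assume "x < y"
  moreover have "x * y \<le> 0" if "x < 0" "0 \<le> y" using that by (simp add: mult_nonpos_nonneg)
  ultimately show "pos_rat x < pos_rat y" unfolding pos_rat_def by (auto simp: field_simps)
qed

lemma pos_rat_surj: "0 < y \<Longrightarrow> \<exists>x. pos_rat x = y"
proof (cases "1 \<le> y")
  case True
  then show ?thesis by (intro exI[of _ "y - 1"]) (simp add: pos_rat_def)
next
  case False
  moreover assume "0 < y"
  ultimately have "1 - 1 / y < 0" by (simp add: field_simps)
  with \<open>0 < y\<close> show ?thesis by (intro exI[of _ "1 - 1 / y"]) (simp add: pos_rat_def field_simps)
qed

text \<open>Off distset the description is junk; on it, e^(-q) is sent to pos_rat (-q).\<close>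
definition dist_rat :: "real \<Rightarrow> rat" where
  "dist_rat r = (if r = 0 then 0 else pos_rat (- (THE q. r = exp (- real_of_rat q))))"

lemma dist_rat_0 [simp]: "dist_rat 0 = 0"
  unfolding dist_rat_def by simp

lemma dist_rat_exp [simp]: "dist_rat (exp (- real_of_rat q)) = pos_rat (- q)"
proof -
  have "(THE q'. exp (- real_of_rat q) = exp (- real_of_rat q')) = q"
    by (rule the_equality) auto
  then show ?thesis unfolding dist_rat_def by simp
qed

lemma strict_mono_on_dist_rat: "strict_mono_on distset dist_rat"
proof (rule strict_mono_onI)
  fix r s assume r: "r \<in> distset" and s: "s \<in> distset" and "r < s"
  then obtain q2 where q2: "s = exp (- real_of_rat q2)"
    unfolding distset_def by auto
  show "dist_rat r < dist_rat s"
  proof (cases "r = 0")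
    case True
    then show ?thesis using q2 pos_rat_gt_0 by simp
  next
    case False
    then obtain q1 where q1: "r = exp (- real_of_rat q1)" using r unfolding distset_def by auto
    with q2 \<open>r < s\<close> have "- q1 < - q2" by (simp add: of_rat_less)
    with q1 q2 show ?thesis using strict_mono_pos_rat by (simp add: strict_mono_less)
  qed
qed

lemma bij_betw_dist_rat: "bij_betw dist_rat distset {q. 0 \<le> q}"
  unfolding bij_betw_def
proof
  show "inj_on dist_rat distset"
    using strict_mono_on_dist_rat by (rule strict_mono_on_imp_inj_on)
  show "dist_rat ` distset = {q. 0 \<le> q}"
  proof
    show "dist_rat ` distset \<subseteq> {q. 0 \<le> q}"
      unfolding distset_def using pos_rat_gt_0 by (auto simp: less_imp_le)
  next
    show "{q. 0 \<le> q} \<subseteq> dist_rat ` distset"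
    proof
      fix y :: rat assume "y \<in> {q. 0 \<le> q}"
      then consider "y = 0" | "0 < y" by force
      then show "y \<in> dist_rat ` distset"
      proof cases
        case 1
        then show ?thesis unfolding distset_def by force
      next
        case 2
        then obtain x where "pos_rat x = y" using pos_rat_surj by blast
        then have "dist_rat (exp (- real_of_rat (- x))) = y" by simp
        moreover have "exp (- real_of_rat (- x)) \<in> distset" unfolding distset_def by blast
        ultimately show ?thesis by (metis image_eqI)
      qed
    qed
  qed
qed

section \<open>The valued field k(t^Q)\<close>

lemma hahn_if_hsupp_subset:
  assumes a: "a \<in> hahn" and b: "b \<in> hahn" and c: "hsupp c \<subseteq> hsupp a \<union> hsupp b"
  shows "c \<in> hahn"
  unfolding hahn_def
proof (intro CollectI allI impI)
  have least: "\<exists>m\<in>T. \<forall>x\<in>T. m \<le> x" if "f \<in> hahn" "T \<subseteq> hsupp f" "T \<noteq> {}" for f T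
    using that unfolding hahn_def by blast
  fix S assume S: "S \<subseteq> hsupp c" "S \<noteq> {}"
  consider "S \<subseteq> hsupp a" | "S \<subseteq> hsupp b" | "S \<inter> hsupp a \<noteq> {}" "S \<inter> hsupp b \<noteq> {}"
    using S c by blast
  then show "\<exists>m\<in>S. \<forall>x\<in>S. m \<le> x"
  proof cases
    case 3
    obtain ma where ma: "ma \<in> S \<inter> hsupp a" "\<forall>x\<in>S \<inter> hsupp a. ma \<le> x"
      using least[OF a _ 3(1)] by blast
    obtain mb where mb: "mb \<in> S \<inter> hsupp b" "\<forall>x\<in>S \<inter> hsupp b. mb \<le> x"
      using least[OF b _ 3(2)] by blast
    have "\<forall>x\<in>S. min ma mb \<le> x"
      using ma mb S c by (auto simp: min_le_iff_disj)
    moreover have "min ma mb \<in> S" using ma mb by (simp add: min_def)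
    ultimately show ?thesis by blast
  qed (use least a b S in blast)+
qed

lemma hsupp_hsub: "hsupp (hsub a b) \<subseteq> hsupp a \<union> hsupp b"
  unfolding hsupp_def hsub_def by auto

lemma hahn_hsub: "a \<in> hahn \<Longrightarrow> b \<in> hahn \<Longrightarrow> hsub a b \<in> hahn"
  using hahn_if_hsupp_subset hsupp_hsub by blast

lemma hsub_eq_0_iff: "hsub a b = (\<lambda>_. 0) \<longleftrightarrow> a = b"
  unfolding hsub_def by (auto simp: fun_eq_iff)

lemma hval_eqI: "m \<in> hsupp a \<Longrightarrow> (\<And>x. x < m \<Longrightarrow> a x = 0) \<Longrightarrow> hval a = m"
  unfolding hval_def
  by (rule Least_equality) (auto simp: hsupp_def intro: ccontr[of "_ \<le> _"] dest: not_le_imp_less)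

lemma
  assumes "a \<in> hahn" "a \<noteq> (\<lambda>_. 0)"
  shows hval_in_hsupp: "hval a \<in> hsupp a"
    and hval_le: "x \<in> hsupp a \<Longrightarrow> hval a \<le> x"
proof -
  have "hsupp a \<noteq> {}" using assms(2) unfolding hsupp_def by auto
  then obtain m where m: "m \<in> hsupp a" "\<forall>x\<in>hsupp a. m \<le> x"
    using assms(1) unfolding hahn_def by blast
  have "hval a = m"
    by (rule hval_eqI[OF m(1)]) (use m(2) in \<open>force simp: hsupp_def\<close>)
  with m show "hval a \<in> hsupp a" "x \<in> hsupp a \<Longrightarrow> hval a \<le> x" by auto
qed

lemma hval_hsub_commute: "hval (hsub a b) = hval (hsub b a)"
proof -
  have "hsupp (hsub a b) = hsupp (hsub b a)" unfolding hsupp_def hsub_def by auto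
  then show ?thesis unfolding hval_def by simp
qed

lemma min_hval_hsub_le:
  assumes "a \<in> hahn" "b \<in> hahn" "c \<in> hahn" "a \<noteq> b" "b \<noteq> c" "a \<noteq> c"
  shows "min (hval (hsub a b)) (hval (hsub b c)) \<le> hval (hsub a c)"
proof -
  have ne: "hsub a c \<noteq> (\<lambda>_. 0)" "hsub a b \<noteq> (\<lambda>_. 0)" "hsub b c \<noteq> (\<lambda>_. 0)"
    using assms hsub_eq_0_iff by metis+
  have "hval (hsub a c) \<in> hsupp (hsub a c)"
    using hval_in_hsupp[OF hahn_hsub[OF assms(1,3)] ne(1)] .
  then have "hval (hsub a c) \<in> hsupp (hsub a b) \<or> hval (hsub a c) \<in> hsupp (hsub b c)"
    unfolding hsupp_def hsub_def by auto
  then show ?thesis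
    using hval_le[OF hahn_hsub[OF assms(1,2)] ne(2)] hval_le[OF hahn_hsub[OF assms(2,3)] ne(3)]
    by (auto simp: min_le_iff_disj)
qed

lemma dist_rat_hdist: "dist_rat (hdist a b) = (if a = b then 0 else pos_rat (- hval (hsub a b)))"
  unfolding hdist_def by simp

lemma rat_ultrametric_hahn:
  "rat_ultrametric (hahn :: (rat \<Rightarrow> 'k::field) set) (\<lambda>a b. dist_rat (hdist a b))"
  unfolding rat_ultrametric_def
proof (intro conjI ballI)
  fix a b :: "rat \<Rightarrow> 'k"
  show "0 \<le> dist_rat (hdist a b)" "dist_rat (hdist a b) = 0 \<longleftrightarrow> a = b"
    "dist_rat (hdist a b) = dist_rat (hdist b a)"
    unfolding dist_rat_hdist using pos_rat_gt_0[of "- hval (hsub a b)"] hval_hsub_commute[of a b]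
    by (auto simp: less_imp_le)
next
  fix a b c :: "rat \<Rightarrow> 'k" assume abc: "a \<in> hahn" "b \<in> hahn" "c \<in> hahn"
  show "dist_rat (hdist a c) \<le> max (dist_rat (hdist a b)) (dist_rat (hdist b c))"
  proof (cases "a = b \<or> b = c \<or> a = c")
    case True
    then show ?thesis unfolding dist_rat_hdist using pos_rat_gt_0
      by (auto simp: le_max_iff_disj less_imp_le)
  next
    case False
    then have "min (hval (hsub a b)) (hval (hsub b c)) \<le> hval (hsub a c)"
      using min_hval_hsub_le[OF abc] by blast
    with False show ?thesis unfolding dist_rat_hdist
      using strict_mono_pos_rat by (auto simp: strict_mono_less_eq le_max_iff_disj min_le_iff_disj)
  qed
qed

lemma hrat_subset_hahn: "hrat \<subseteq> hahn"
  unfolding hrat_def by blast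

lemma hmul_eq_sum_hsupp:
  assumes "finite (hsupp q)"
  shows "hmul a q x = (\<Sum>s\<in>hsupp q. a (x - s) * q s)"
proof -
  let ?S = "{s \<in> hsupp q. x - s \<in> hsupp a}"
  have pairs: "{(r, s). r \<in> hsupp a \<and> s \<in> hsupp q \<and> r + s = x} = (\<lambda>s. (x - s, s)) ` ?S"
    by (auto simp: image_iff algebra_simps)
  have "inj_on (\<lambda>s. (x - s, s)) ?S" by (auto simp: inj_on_def)
  then have "hmul a q x = (\<Sum>s\<in>?S. a (x - s) * q s)"
    unfolding hmul_def pairs by (simp add: sum.reindex)
  also have "\<dots> = (\<Sum>s\<in>hsupp q. a (x - s) * q s)"
    by (rule sum.mono_neutral_left[OF assms]) (auto simp: hsupp_def)
  finally show ?thesis .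
qed

text \<open>Comparing coefficients at v(a - b) + min (supp q): only one term of (a - b) q survives.\<close>
lemma hmul_right_cancel:
  assumes a: "a \<in> hahn" and b: "b \<in> hahn" and fin: "finite (hsupp q)" and q: "q \<noteq> (\<lambda>_. 0)"
    and eq: "hmul a q = hmul b q"
  shows "a = b"
proof (rule ccontr)
  assume "a \<noteq> b"
  define d where "d = hsub a b"
  have d: "d \<in> hahn" "d \<noteq> (\<lambda>_. 0)" using hahn_hsub a b \<open>a \<noteq> b\<close> hsub_eq_0_iff d_def by metis+
  have diff: "hmul a q x - hmul b q x = (\<Sum>s\<in>hsupp q. d (x - s) * q s)" for x
    unfolding hmul_eq_sum_hsupp[OF fin] d_def hsub_def
    by (simp add: sum_subtractf[symmetric] left_diff_distrib)
  have "hsupp q \<noteq> {}" using q unfolding hsupp_def by auto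
  define vq where "vq = Min (hsupp q)"
  have vq: "vq \<in> hsupp q" "\<forall>s\<in>hsupp q. vq \<le> s" using fin \<open>hsupp q \<noteq> {}\<close> unfolding vq_def by auto
  define vd where "vd = hval d"
  have vd: "vd \<in> hsupp d" "\<forall>s\<in>hsupp d. vd \<le> s" using hval_in_hsupp[OF d] hval_le[OF d] vd_def by auto
  have "(\<Sum>s\<in>hsupp q - {vq}. d (vd + vq - s) * q s) = 0"
  proof (rule sum.neutral, rule ballI)
    fix s assume "s \<in> hsupp q - {vq}"
    then have "vd + vq - s < vd" using vq by force
    then have "vd + vq - s \<notin> hsupp d" using vd by force
    then show "d (vd + vq - s) * q s = 0" unfolding hsupp_def by simp
  qed
  then have "(\<Sum>s\<in>hsupp q. d (vd + vq - s) * q s) = d vd * q vq"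
    using sum.remove[OF fin vq(1), of "\<lambda>s. d (vd + vq - s) * q s"] by simp
  moreover have "d vd * q vq \<noteq> 0" using vd(1) vq(1) unfolding hsupp_def by simp
  ultimately show False using diff[of "vd + vq"] eq by simp
qed

lemma countable_hpoly: "countable (hpoly :: (rat \<Rightarrow> 'k::{field,countable}) set)"
proof -
  define of_list :: "(rat \<times> 'k) list \<Rightarrow> rat \<Rightarrow> 'k" where
    "of_list xs q = (case map_of xs q of None \<Rightarrow> 0 | Some v \<Rightarrow> v)" for xs q
  have "hpoly \<subseteq> range of_list"
  proof
    fix a :: "rat \<Rightarrow> 'k" assume "a \<in> hpoly"
    then have "finite (hsupp a)" unfolding hpoly_def by simp
    then have "a = of_list (map (\<lambda>q. (q, a q)) (sorted_list_of_set (hsupp a)))"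
      by (auto simp: fun_eq_iff of_list_def map_of_map_restrict restrict_map_def hsupp_def)
    then show "a \<in> range of_list" by blast
  qed
  then show ?thesis
    by (rule countable_subset) (simp add: countable_image)
qed

lemma countable_hrat: "countable (hrat :: (rat \<Rightarrow> 'k::{field,countable}) set)"
proof -
  define quot :: "(rat \<Rightarrow> 'k) \<times> (rat \<Rightarrow> 'k) \<Rightarrow> rat \<Rightarrow> 'k" where
    "quot pq = (THE a. a \<in> hahn \<and> hmul a (snd pq) = fst pq)" for pq
  have "hrat \<subseteq> quot ` (hpoly \<times> (hpoly - {\<lambda>_. 0}))"
  proof
    fix a :: "rat \<Rightarrow> 'k" assume "a \<in> hrat"
    then obtain p q where pq: "p \<in> hpoly" "q \<in> hpoly" "q \<noteq> (\<lambda>_. 0)" "hmul a q = p"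
      and a: "a \<in> hahn"
      unfolding hrat_def by blast
    have "quot (p, q) = a"
      unfolding quot_def fst_conv snd_conv
    proof (rule the_equality)
      fix b assume b: "b \<in> hahn \<and> hmul b q = p"
      have "finite (hsupp q)" using pq(2) unfolding hpoly_def by simp
      with b a pq(3,4) show "b = a" using hmul_right_cancel[of b a q] by simp
    qed (use a pq(4) in simp)
    moreover have "(p, q) \<in> hpoly \<times> (hpoly - {\<lambda>_. 0})" using pq by simp
    ultimately show "a \<in> quot ` (hpoly \<times> (hpoly - {\<lambda>_. 0}))" by (metis image_eqI)
  qed
  moreover have "countable (quot ` (hpoly \<times> (hpoly - {\<lambda>_. 0})))"
    by (intro countable_image countable_SIGMA countable_Diff countable_hpoly)
  ultimately show ?thesis by (rule countable_subset)
qed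

lemma hpoly_subset_hahn: "hpoly \<subseteq> hahn"
  unfolding hpoly_def hahn_def
proof (intro subsetI CollectI allI impI)
  fix a :: "rat \<Rightarrow> 'k::field" and S
  assume "a \<in> {a. finite (hsupp a)}" "S \<subseteq> hsupp a" "S \<noteq> {}"
  then have "finite S" "S \<noteq> {}" by (auto intro: finite_subset)
  then show "\<exists>m\<in>S. \<forall>x\<in>S. m \<le> x" by (intro bexI[of _ "Min S"]) auto
qed

lemma hsupp_hmul_subset: "hsupp (hmul a b) \<subseteq> (\<lambda>(r, s). r + s) ` (hsupp a \<times> hsupp b)"
proof
  fix x assume x: "x \<in> hsupp (hmul a b)"
  have "{(r, s). r \<in> hsupp a \<and> s \<in> hsupp b \<and> r + s = x} \<noteq> {}"
  proof
    assume "{(r, s). r \<in> hsupp a \<and> s \<in> hsupp b \<and> r + s = x} = {}"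
    then have "hmul a b x = 0" unfolding hmul_def by (simp only: sum.empty)
    with x show False unfolding hsupp_def by simp
  qed
  then obtain r s where "r \<in> hsupp a" "s \<in> hsupp b" "x = r + s" by blast
  then show "x \<in> (\<lambda>(r, s). r + s) ` (hsupp a \<times> hsupp b)" by force
qed

lemma hmul_hpoly: "a \<in> hpoly \<Longrightarrow> b \<in> hpoly \<Longrightarrow> hmul a b \<in> hpoly"
  unfolding hpoly_def using hsupp_hmul_subset finite_subset by blast

lemma hmul_hadd_left:
  assumes "finite (hsupp q)"
  shows "hmul (hadd a b) q = hadd (hmul a q) (hmul b q)"
  unfolding hadd_def hmul_eq_sum_hsupp[OF assms] by (simp add: distrib_right sum.distrib)

lemma hrat_hadd_hpoly:
  assumes a: "a \<in> hrat" and b: "b \<in> hpoly"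
  shows "hadd a b \<in> hrat"
proof -
  obtain p q where p: "p \<in> hpoly" and q: "q \<in> hpoly" "q \<noteq> (\<lambda>_. 0)" and aq: "hmul a q = p"
    using a unfolding hrat_def by blast
  have "a \<in> hahn" using a unfolding hrat_def by blast
  moreover have "b \<in> hahn" using b hpoly_subset_hahn by blast
  moreover have "hsupp (hadd a b) \<subseteq> hsupp a \<union> hsupp b" unfolding hsupp_def hadd_def by auto
  ultimately have "hadd a b \<in> hahn" by (rule hahn_if_hsupp_subset)
  moreover have "hmul (hadd a b) q = hadd p (hmul b q)"
    using q aq unfolding hpoly_def by (simp add: hmul_hadd_left)
  moreover have "hadd p (hmul b q) \<in> hpoly"
  proof -
    have "hsupp (hadd p (hmul b q)) \<subseteq> hsupp p \<union> hsupp (hmul b q)"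
      unfolding hsupp_def hadd_def by auto
    with p hmul_hpoly[OF b q(1)] show ?thesis unfolding hpoly_def by (simp add: finite_subset)
  qed
  ultimately show ?thesis using q unfolding hrat_def by blast
qed

definition hmonom :: "rat \<Rightarrow> 'k::field \<Rightarrow> rat \<Rightarrow> 'k" where
  "hmonom \<gamma> c x = (if x = \<gamma> then c else 0)"

lemma hmonom_hpoly: "hmonom \<gamma> c \<in> hpoly"
proof -
  have "hsupp (hmonom \<gamma> c) \<subseteq> {\<gamma>}" unfolding hsupp_def hmonom_def by auto
  then show ?thesis unfolding hpoly_def by (auto intro: finite_subset)
qed

lemma zero_in_hrat: "(\<lambda>_. 0) \<in> (hrat :: (rat \<Rightarrow> 'k::field) set)"
proof -
  have zero: "(\<lambda>_. 0) \<in> (hpoly :: (rat \<Rightarrow> 'k) set)" unfolding hpoly_def hsupp_def by simp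
  have "hmonom 0 1 \<noteq> (\<lambda>_. 0 :: 'k)" unfolding hmonom_def by (auto simp: fun_eq_iff)
  moreover have "hmul (\<lambda>_. 0) (hmonom 0 1) = (\<lambda>_. 0 :: 'k)" unfolding hmul_def hsupp_def by simp
  ultimately show ?thesis
    using zero hmonom_hpoly hpoly_subset_hahn unfolding hrat_def by blast
qed

lemma eq_below_hval_hsub:
  assumes "a \<in> hahn" "b \<in> hahn" "x < hval (hsub a b)"
  shows "a x = b x"
proof (cases "a = b")
  case False
  then have "hsub a b \<noteq> (\<lambda>_. 0)" using hsub_eq_0_iff by blast
  with assms have "x \<notin> hsupp (hsub a b)" using hval_le[OF hahn_hsub] by force
  then show ?thesis unfolding hsupp_def hsub_def by simp
qed simp

lemma
  assumes "\<forall>x<\<gamma>. a x = b x" and "b \<gamma> + c \<noteq> a \<gamma>"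
  shows hadd_hmonom_neq: "hadd b (hmonom \<gamma> c) \<noteq> a"
    and hval_hsub_hadd_hmonom: "hval (hsub (hadd b (hmonom \<gamma> c)) a) = \<gamma>"
proof -
  have "hsub (hadd b (hmonom \<gamma> c)) a \<gamma> \<noteq> 0"
    using assms(2) unfolding hsub_def hadd_def hmonom_def by simp
  then show "hadd b (hmonom \<gamma> c) \<noteq> a" "hval (hsub (hadd b (hmonom \<gamma> c)) a) = \<gamma>"
    using assms(1) by (auto simp: hsupp_def hsub_def hadd_def hmonom_def intro!: hval_eqI)
qed

lemma hrat_sphere_point:
  assumes inf: "infinite (UNIV :: 'k::field set)"
    and "finite A" and A: "A \<subseteq> (hrat :: (rat \<Rightarrow> 'k) set)" and a0: "a0 \<in> hrat" and "0 < m"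
  shows "\<exists>z\<in>hrat. dist_rat (hdist z a0) = m \<and>
           (\<forall>a\<in>A. dist_rat (hdist a a0) \<le> m \<longrightarrow> dist_rat (hdist z a) = m)"
proof -
  obtain \<gamma> where \<gamma>: "pos_rat (- \<gamma>) = m"
    using pos_rat_surj[OF \<open>0 < m\<close>] by (metis minus_minus)
  have "finite ((\<lambda>a. a \<gamma> - a0 \<gamma>) ` insert a0 A)" using \<open>finite A\<close> by simp
  then obtain c :: 'k where c: "c \<notin> (\<lambda>a. a \<gamma> - a0 \<gamma>) ` insert a0 A"
    using ex_new_if_finite[OF inf] by blast
  define z where "z = hadd a0 (hmonom \<gamma> c)"
  have "z \<in> hrat" unfolding z_def using a0 hmonom_hpoly by (rule hrat_hadd_hpoly)
  have far: "dist_rat (hdist z a) = m" if "a \<in> insert a0 A" "\<forall>x<\<gamma>. a x = a0 x" for a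
  proof -
    have "a0 \<gamma> + c \<noteq> a \<gamma>" using c that(1) by (auto simp: algebra_simps)
    with that(2) have "z \<noteq> a" "hval (hsub z a) = \<gamma>"
      unfolding z_def using hadd_hmonom_neq hval_hsub_hadd_hmonom by (metis eq_commute)+
    with \<gamma> show ?thesis unfolding dist_rat_hdist by simp
  qed
  have close: "\<forall>x<\<gamma>. a x = a0 x" if "a \<in> A" "dist_rat (hdist a a0) \<le> m" for a
  proof (cases "a = a0")
    case False
    with that(2) \<gamma> have "pos_rat (- hval (hsub a a0)) \<le> pos_rat (- \<gamma>)"
      unfolding dist_rat_hdist by simp
    then have "\<gamma> \<le> hval (hsub a a0)"
      using strict_mono_pos_rat by (simp add: strict_mono_less_eq)
    moreover have "a \<in> hahn" "a0 \<in> hahn" using that(1) A a0 hrat_subset_hahn by blast+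
    ultimately show ?thesis using eq_below_hval_hsub by force
  qed simp
  show ?thesis
    using \<open>z \<in> hrat\<close> far[of a0] far close by blast
qed

lemma rat_ultrametric_hrat:
  "rat_ultrametric (hrat :: (rat \<Rightarrow> 'k::field) set) (\<lambda>a b. dist_rat (hdist a b))"
  by (rule rat_ultrametric_subset[OF rat_ultrametric_hahn hrat_subset_hahn])

lemma extension_property_hrat:
  assumes "infinite (UNIV :: 'k::field set)"
  shows "extension_property (hrat :: (rat \<Rightarrow> 'k) set) (\<lambda>a b. dist_rat (hdist a b))"
proof (rule extension_propertyI)
  show "rat_ultrametric (hrat :: (rat \<Rightarrow> 'k) set) (\<lambda>a b. dist_rat (hdist a b))"
    by (rule rat_ultrametric_hrat)
  show "(hrat :: (rat \<Rightarrow> 'k) set) \<noteq> {}" using zero_in_hrat by blast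
qed (rule hrat_sphere_point[OF assms])

theorem corollary3p33:
  assumes "infinite (UNIV :: ('k::{field,countable}) set)"
  shows "\<exists>\<phi> :: real \<Rightarrow> rat.
           bij_betw \<phi> distset {q. 0 \<le> q} \<and> strict_mono_on distset \<phi> \<and>
           rat_urysohn (hrat :: (rat \<Rightarrow> 'k) set) (\<lambda>a b. \<phi> (hdist a b)) \<and>
           (\<forall>(U :: nat set) \<delta>. rat_urysohn U \<delta> \<longrightarrow>
              (\<exists>f. bij_betw f (hrat :: (rat \<Rightarrow> 'k) set) U \<and>
                   (\<forall>a\<in>hrat. \<forall>b\<in>hrat. \<delta> (f a) (f b) = \<phi> (hdist a b))))"
proof -
  let ?X = "hrat :: (rat \<Rightarrow> 'k) set" and ?d = "\<lambda>a b. dist_rat (hdist a b)"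
  have cnt: "countable ?X" by (rule countable_hrat)
  have um: "rat_ultrametric ?X ?d" by (rule rat_ultrametric_hrat)
  have ep: "extension_property ?X ?d" by (rule extension_property_hrat[OF assms])
  have "\<forall>(U :: nat set) \<delta>. rat_urysohn U \<delta> \<longrightarrow>
      (\<exists>f. bij_betw f ?X U \<and> (\<forall>a\<in>?X. \<forall>b\<in>?X. \<delta> (f a) (f b) = ?d a b))"
    using isometric_to_rat_urysohn[OF cnt um ep] by blast
  with bij_betw_dist_rat strict_mono_on_dist_rat rat_urysohn_if_extension_property[OF cnt um ep]
  show ?thesis by (intro exI[of _ dist_rat]) blast
qed

end
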